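(* Let $H\in(1/2,1)$ and $c\in(0,2^{2H-2})$, and let $T^\circ$ be the $\mathbb{N}$-valued random variable with \[ P(T^\circ=1)=c\,L^\circ_H(\{1,2\})=c,\qquad P(T^\circ=k)=c\,D^\circ_H(\{1,k+1\},\{2,3,\dots,k\})\ \ (k\ge2). \] Then $E(T^\circ)=\infty$, and there is a slowly varying function $L_2$ (depending on the parameters) such that $P(T^\circ>t)=t^{1-2H}L_2(t)$.
   Context: For a finite set $A=\{i_0<\dots<i_k\}\subset\mathbb{N}\cup\{0\}$ with $|A|\ge1$ define $L^\circ_H(A)=\prod_{j=1}^{k}|i_j-i_{j-1}|^{2H-2}$ (equal to $1$ if $|A|=1$), and for disjoint finite $A\ne\emptyset$, $B$ define $D^\circ_H(A,B)=\sum_{B'\subseteq B}(-1)^{|B'|}c^{|B'|}L^\circ_H(A\cup B')$. Equivalently, $T^\circ$ has the law of $\min\{i\ge1:X^*_i=1\}$ for the GBP-II$^*$ process $(X^*_i)_{i\in\mathbb{N}}$, the $\{0,1\}$-valued process with $P(\bigcap_{i\in A}\{X^*_i=1\}\cap\bigcap_{i\in B}\{X^*_i=0\})=c^{|A|}D^\circ_H(A\cup\{0\},B)$ for disjoint finite $A,B\subset\mathbb{N}$; in that process successive gaps between 1's are i.i.d. copies of $T^\circ$. *)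

theory Defs
  imports "HOL-Probability.Probability"
begin

definition Lcirc :: "real \<Rightarrow> nat set \<Rightarrow> real" where
  "Lcirc H A = (let xs = sorted_list_of_set A in
     (\<Prod>j\<in>{1..<length xs}. real (xs ! j - xs ! (j - 1)) powr (2 * H - 2)))"

definition Dcirc :: "real \<Rightarrow> real \<Rightarrow> nat set \<Rightarrow> nat set \<Rightarrow> real" where
  "Dcirc H c A B = (\<Sum>B'\<in>Pow B. (-1) ^ card B' * c ^ card B' * Lcirc H (A \<union> B'))"

definition slowly_varying :: "(real \<Rightarrow> real) \<Rightarrow> bool" where
  "slowly_varying L \<longleftrightarrow>
     (\<forall>x>0. L x > 0) \<and> L \<in> borel_measurable borel \<and>
     (\<forall>lam>0. ((\<lambda>t. L (lam * t) / L t) \<longlongrightarrow> 1) at_top)"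

end

theory Submission
  imports Defs "HOL-Computational_Algebra.Formal_Power_Series"
begin

text \<open>
  Expanding D-circ along its least interior point shows that the law f of T satisfies the
  renewal equation f(k) = u(k) - (\<Sum>0<i<k. u(i) f(k-i)) with u(k) = c k^(2H-2), so the
  generating functions satisfy U (1 - F) = 1. Hence the tails r(n) = P(T > n) obey
  (\<Sum>k\<le>n. v(k)) = (\<Sum>j\<le>n. r(j) w(n-j)) for v(k) = k^(1-2H) and w = u * v. A Riemann sum for
  the Beta integral shows that w converges to \<kappa> = c B(2H-1, 2-2H) > 0, while the left side
  grows like n^(2-2H) / (2-2H); averaging gives (\<Sum>j\<le>n. r(j)) ~ n^(2-2H) / ((2-2H) \<kappa>), and
  since r is monotone this may be differentiated: r(n) ~ n^(1-2H) / \<kappa>. So E T = \<Sum>n. r(n) = \<infinity>,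
  and t^(2H-1) P(T > t) even converges to a positive constant.
\<close>

lemma Lcirc_singleton [simp]: "Lcirc H {a} = 1"
  by (simp add: Lcirc_def)

lemma Lcirc_insert_Min:
  assumes "finite S" "S \<noteq> {}" "\<forall>x\<in>S. a < x"
  shows "Lcirc H (insert a S) = real (Min S - a) powr (2*H-2) * Lcirc H S"
proof -
  define xs where "xs = sorted_list_of_set S"
  define g where "g ys j = real (ys ! j - ys ! (j - 1)) powr (2*H-2)" for ys :: "nat list" and j
  have "Min (insert a S) = a" using assms by (auto intro!: Min_eqI)
  then have xs': "sorted_list_of_set (insert a S) = a # xs"
    using sorted_list_of_set_nonempty[of "insert a S"] assms by (auto simp: xs_def)
  have hd: "xs ! 0 = Min S"
    using sorted_list_of_set_nonempty[of S] assms by (simp add: xs_def)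
  obtain n where n: "length xs = Suc n"
    using assms by (simp add: xs_def) (metis card_0_eq not0_implies_Suc)
  have "Lcirc H (insert a S) = (\<Prod>j\<in>{1..<Suc (Suc n)}. g (a # xs) j)"
    using n by (simp only: Lcirc_def Let_def xs' g_def length_Cons)
  also have "{1..<Suc (Suc n)} = insert 1 (Suc ` {1..<Suc n})"
    by (auto simp: image_iff)
  also have "(\<Prod>j\<in>insert 1 (Suc ` {1..<Suc n}). g (a # xs) j)
      = g (a # xs) 1 * (\<Prod>j\<in>Suc ` {1..<Suc n}. g (a # xs) j)"
    by (rule prod.insert) auto
  also have "(\<Prod>j\<in>Suc ` {1..<Suc n}. g (a # xs) j) = (\<Prod>j\<in>{1..<Suc n}. g xs j)"
    by (rule prod.reindex_cong[of Suc]) (auto simp: g_def nth_Cons')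
  also have "(\<Prod>j\<in>{1..<Suc n}. g xs j) = Lcirc H S"
    by (simp add: Lcirc_def xs_def[symmetric] n g_def)
  finally show ?thesis by (simp add: g_def hd)
qed

lemma Lcirc_doubleton: "a < b \<Longrightarrow> Lcirc H {a, b} = real (b - a) powr (2*H-2)"
  using Lcirc_insert_Min[of "{b}" a H] by simp

lemma Dcirc_doubleton_insert:
  assumes "a < j" "j < b"
  shows "Dcirc H c {a, b} {j..<b}
    = Dcirc H c {a, b} {Suc j..<b} - c * real (j - a) powr (2*H-2) * Dcirc H c {j, b} {Suc j..<b}"
proof -
  define summand where "summand A B' = (-1) ^ card B' * c ^ card B' * Lcirc H (A \<union> B')" for A B'
  have split: "{j..<b} = insert j {Suc j..<b}" using assms by auto
  have "Dcirc H c {a, b} {j..<b}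
      = Dcirc H c {a, b} {Suc j..<b} + (\<Sum>B'\<in>insert j ` Pow {Suc j..<b}. summand {a, b} B')"
    unfolding Dcirc_def summand_def split Pow_insert by (rule sum.union_disjoint) auto
  also have "(\<Sum>B'\<in>insert j ` Pow {Suc j..<b}. summand {a, b} B')
      = (\<Sum>B'\<in>Pow {Suc j..<b}. summand {a, b} (insert j B'))"
  proof (rule sum.reindex_cong[OF _ refl refl])
    show "inj_on (insert j) (Pow {Suc j..<b})"
      by (rule inj_onI) (metis Diff_insert_absorb PowD atLeastLessThan_iff not_less_eq_eq order_refl subsetD)
  qed
  also have "\<dots> = (\<Sum>B'\<in>Pow {Suc j..<b}. - (c * real (j - a) powr (2*H-2)) * summand {j, b} B')"
  proof (rule sum.cong[OF refl])
    fix B assume B: "B \<in> Pow {Suc j..<b}"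
    then have fin: "finite B" and jB: "j \<notin> B" by (auto intro: finite_subset)
    have "Lcirc H (insert a ({j, b} \<union> B))
        = real (Min ({j, b} \<union> B) - a) powr (2*H-2) * Lcirc H ({j, b} \<union> B)"
      by (rule Lcirc_insert_Min) (use B assms fin in auto)
    moreover have "Min ({j, b} \<union> B) = j"
      by (rule Min_eqI) (use B assms fin in auto)
    moreover have "{a, b} \<union> insert j B = insert a ({j, b} \<union> B)" by auto
    ultimately have "Lcirc H ({a, b} \<union> insert j B) = real (j - a) powr (2*H-2) * Lcirc H ({j, b} \<union> B)"
      by simp
    then show "summand {a, b} (insert j B) = - (c * real (j - a) powr (2*H-2)) * summand {j, b} B"
      using fin jB by (simp add: summand_def)
  qed
  also have "\<dots> = - (c * real (j - a) powr (2*H-2)) * Dcirc H c {j, b} {Suc j..<b}"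
    by (simp add: Dcirc_def summand_def sum_distrib_left)
  finally show ?thesis by simp
qed

lemma Dcirc_doubleton_expand:
  assumes "a < j" "j \<le> b"
  shows "Dcirc H c {a, b} {j..<b} = real (b - a) powr (2*H-2)
    - c * (\<Sum>i\<in>{j..<b}. real (i - a) powr (2*H-2) * Dcirc H c {i, b} {Suc i..<b})"
  using assms
proof (induction "b - j" arbitrary: j)
  case 0
  then show ?case by (simp add: Dcirc_def Lcirc_doubleton)
next
  case (Suc k)
  then have jb: "j < b" by simp
  have IH: "Dcirc H c {a, b} {Suc j..<b} = real (b - a) powr (2*H-2)
      - c * (\<Sum>i\<in>{Suc j..<b}. real (i - a) powr (2*H-2) * Dcirc H c {i, b} {Suc i..<b})"
    using Suc by auto
  have "{j..<b} = insert j {Suc j..<b}" using jb by auto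
  then show ?case
    using Dcirc_doubleton_insert[OF Suc.prems(1) jb, of H c] IH by (simp add: algebra_simps)
qed

lemma Dcirc_gap_rec:
  assumes "0 < n"
  shows "Dcirc H c {a, a + n} {Suc a..<a + n} = real n powr (2*H-2)
    - c * (\<Sum>k\<in>{1..<n}. real k powr (2*H-2) * Dcirc H c {a + k, a + n} {Suc (a + k)..<a + n})"
proof -
  have "{Suc a..<a + n} = (+) a ` {1..<n}"
    by (auto simp: image_iff intro!: bexI[where x="_ - a"])
  then have "(\<Sum>i\<in>{Suc a..<a + n}. real (i - a) powr (2*H-2) * Dcirc H c {i, a + n} {Suc i..<a + n})
      = (\<Sum>k\<in>{1..<n}. real k powr (2*H-2) * Dcirc H c {a + k, a + n} {Suc (a + k)..<a + n})"
    by (simp only: sum.reindex[OF inj_on_add] o_def) simp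
  moreover have "Dcirc H c {a, a + n} {Suc a..<a + n} = real n powr (2*H-2)
      - c * (\<Sum>i\<in>{Suc a..<a + n}. real (i - a) powr (2*H-2) * Dcirc H c {i, a + n} {Suc i..<a + n})"
    using assms by (subst Dcirc_doubleton_expand) auto
  ultimately show ?thesis by simp
qed

definition Dgap :: "real \<Rightarrow> real \<Rightarrow> nat \<Rightarrow> real" where
  "Dgap H c n = Dcirc H c {0, n} {1..<n}"

lemma Dcirc_gap_eq_Dgap: "Dcirc H c {a, a + n} {Suc a..<a + n} = Dgap H c n"
proof (induction n arbitrary: a rule: less_induct)
  case (less n)
  show ?case
  proof (cases "n = 0")
    case True
    then show ?thesis by (simp add: Dgap_def Dcirc_def)
  next
    case False
    have "Dcirc H c {a', a' + n} {Suc a'..<a' + n}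
        = real n powr (2*H-2) - c * (\<Sum>k\<in>{1..<n}. real k powr (2*H-2) * Dgap H c (n - k))" for a'
    proof -
      have "Dcirc H c {a' + k, a' + n} {Suc (a' + k)..<a' + n} = Dgap H c (n - k)" if "k \<in> {1..<n}" for k
        using less.IH[of "n - k" "a' + k"] that by simp
      then show ?thesis
        using False by (simp add: Dcirc_gap_rec atLeastLessThan_iff)
    qed
    from this[of a] this[of 0] show ?thesis by (simp add: Dgap_def)
  qed
qed

lemma Dgap_rec:
  "0 < n \<Longrightarrow> Dgap H c n = real n powr (2*H-2) - c * (\<Sum>k\<in>{1..<n}. real k powr (2*H-2) * Dgap H c (n - k))"
proof -
  have "Dcirc H c {k, n} {Suc k..<n} = Dgap H c (n - k)" if "k \<in> {1..<n}" for k
    using Dcirc_gap_eq_Dgap[of H c k "n - k"] that by simp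
  moreover assume "0 < n"
  ultimately show ?thesis
    using Dcirc_gap_rec[of n H c 0] by (simp add: Dgap_def)
qed

lemma renewal_fps_inverse:
  fixes u f :: "nat \<Rightarrow> 'a::comm_ring_1"
  assumes "u 0 = 1" "f 0 = 0"
    and renewal: "\<And>k. 0 < k \<Longrightarrow> f k = u k - (\<Sum>i\<in>{1..<k}. u i * f (k - i))"
  shows "Abs_fps u * (1 - Abs_fps f) = 1"
proof (rule fps_ext)
  fix n
  show "fps_nth (Abs_fps u * (1 - Abs_fps f)) n = fps_nth 1 n"
  proof (cases "n = 0")
    case True
    then show ?thesis by (simp add: fps_mult_nth assms)
  next
    case False
    have "fps_nth (Abs_fps u * (1 - Abs_fps f)) n = (\<Sum>i=0..n. u i * ((if n - i = 0 then 1 else 0) - f (n - i)))"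
      by (simp add: fps_mult_nth fps_one_nth)
    also have "\<dots> = u n - (\<Sum>i=0..n. u i * f (n - i))"
      by (simp add: algebra_simps sum_subtractf if_distrib[of "\<lambda>x. u _ * x"] sum.delta' cong: if_cong)
    also have "(\<Sum>i=0..n. u i * f (n - i)) = f n + (\<Sum>i\<in>{1..<n}. u i * f (n - i))"
    proof -
      have "{0..n} = insert 0 (insert n {1..<n})" using False by auto
      then show ?thesis using False by (simp add: assms)
    qed
    finally show ?thesis using renewal[of n] False by simp
  qed
qed

lemma renewal_tail_convolution:
  fixes u f v :: "nat \<Rightarrow> 'a::comm_ring_1"
  assumes "u 0 = 1" "f 0 = 0"
    and "\<And>k. 0 < k \<Longrightarrow> f k = u k - (\<Sum>i\<in>{1..<k}. u i * f (k - i))"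
  shows "(\<Sum>j\<le>n. (1 - (\<Sum>k\<le>j. f k)) * (\<Sum>i\<le>n - j. u i * v (n - j - i))) = (\<Sum>k\<le>n. v k)"
proof -
  have tails: "Abs_fps (\<lambda>j. 1 - (\<Sum>k\<le>j. f k)) = (1 - Abs_fps f) * Abs_fps (\<lambda>_. 1)"
    by (rule fps_ext) (simp add: fps_mult_nth sum_subtractf atLeast0AtMost)
  have "Abs_fps (\<lambda>j. 1 - (\<Sum>k\<le>j. f k)) * (Abs_fps u * Abs_fps v)
      = (Abs_fps u * (1 - Abs_fps f)) * (Abs_fps (\<lambda>_. 1) * Abs_fps v)"
    unfolding tails by (simp only: ac_simps)
  also have "\<dots> = Abs_fps (\<lambda>_. 1) * Abs_fps v"
    using renewal_fps_inverse[OF assms] by simp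
  finally have "fps_nth (Abs_fps (\<lambda>j. 1 - (\<Sum>k\<le>j. f k)) * (Abs_fps u * Abs_fps v)) n
      = fps_nth (Abs_fps (\<lambda>_. 1) * Abs_fps v) n" by simp
  moreover have "(\<Sum>i\<le>n. v (n - i)) = (\<Sum>k\<le>n. v k)"
    using sum.atLeastAtMost_rev[of v 0 n] by (simp add: atLeast0AtMost)
  ultimately show ?thesis by (simp add: fps_mult_nth atLeast0AtMost)
qed

text \<open>The cell ((m-1)/m, 1] is left out, so g is never evaluated at 1, where the Beta integrand
  may be singular.\<close>

definition step_approx :: "(real \<Rightarrow> real) \<Rightarrow> nat \<Rightarrow> real \<Rightarrow> real" where
  "step_approx g m x =
    (\<Sum>i\<in>{1..<m}. g (real i / real m) * indicator {(real i - 1) / real m<..real i / real m} x)"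

lemma step_approx_eq:
  "step_approx g m x =
    (if 0 < x \<and> nat \<lceil>real m * x\<rceil> \<in> {1..<m} then g (real (nat \<lceil>real m * x\<rceil>) / real m) else 0)"
proof (cases "m = 0")
  case False
  then have m: "real m > 0" by simp
  have ind: "indicator {(real i - 1) / real m<..real i / real m} x
      = (if 0 < x \<and> i = nat \<lceil>real m * x\<rceil> then 1 else (0::real))" if "i \<ge> 1" for i
  proof -
    have "x \<in> {(real i - 1) / real m<..real i / real m} \<longleftrightarrow> real i - 1 < real m * x \<and> real m * x \<le> real i"
      using m by (auto simp: field_simps)
    also have "\<dots> \<longleftrightarrow> 0 < x \<and> i = nat \<lceil>real m * x\<rceil>"
    proof
      assume h: "real i - 1 < real m * x \<and> real m * x \<le> real i"
      then have "real m * x > 0" using that by simp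
      then have "0 < x" using m by (simp add: zero_less_mult_iff)
      moreover have "\<lceil>real m * x\<rceil> = int i" using h by (simp add: ceiling_eq_iff)
      ultimately show "0 < x \<and> i = nat \<lceil>real m * x\<rceil>" by simp
    next
      assume h: "0 < x \<and> i = nat \<lceil>real m * x\<rceil>"
      then have "\<lceil>real m * x\<rceil> > 0" using m by simp
      then have "\<lceil>real m * x\<rceil> = int i" using h by simp
      then show "real i - 1 < real m * x \<and> real m * x \<le> real i" by (simp add: ceiling_eq_iff)
    qed
    finally show ?thesis by (simp add: indicator_def)
  qed
  have "step_approx g m x
      = (\<Sum>i\<in>{1..<m}. if i = nat \<lceil>real m * x\<rceil> then (if 0 < x then g (real i / real m) else 0) else 0)"
    unfolding step_approx_def by (rule sum.cong) (auto simp: ind)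
  then show ?thesis by (simp add: sum.delta)
qed (simp add: step_approx_def)

lemma integral_step_approx:
  "integral\<^sup>L lborel (step_approx g m) = (\<Sum>i\<in>{1..<m}. g (real i / real m)) / real m"
proof -
  have le: "(real i - 1) / real m \<le> real i / real m" for i
    by (simp add: divide_right_mono)
  have "integral\<^sup>L lborel (step_approx g m)
      = (\<Sum>i\<in>{1..<m}. g (real i / real m) * measure lborel {(real i - 1) / real m<..real i / real m})"
    unfolding step_approx_def using le
    by (subst Bochner_Integration.integral_sum) (auto intro!: integrable_real_indicator)
  also have "\<dots> = (\<Sum>i\<in>{1..<m}. g (real i / real m) / real m)"
    by (rule sum.cong) (auto simp: diff_divide_distrib)
  finally show ?thesis by (simp add: sum_divide_distrib)
qed

lemma ceiling_mult_in_range: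
  assumes "0 < x" "x < 1" "real m * (1 - x) > 1"
  shows "nat \<lceil>real m * x\<rceil> \<in> {1..<m}"
proof -
  have "real m * x \<le> of_int (int m - 1)"
    using assms(3) by (simp add: algebra_simps)
  then have "\<lceil>real m * x\<rceil> \<le> int m - 1" by (rule ceiling_le)
  moreover have "real m > 0" using assms by (auto intro: ccontr)
  then have "\<lceil>real m * x\<rceil> \<ge> 1" using assms by (simp add: zero_less_mult_iff)
  ultimately show ?thesis by (simp add: nat_less_iff le_nat_iff)
qed

lemma step_approx_tendsto:
  assumes g: "continuous_on {0<..<1} g"
  shows "(\<lambda>m. step_approx g m x) \<longlonglongrightarrow> indicator {0<..<1} x * g x"
proof (cases "0 < x \<and> x < 1")
  case False
  have "\<not> (0 < x \<and> nat \<lceil>real m * x\<rceil> \<in> {1..<m})" for m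
  proof
    assume h: "0 < x \<and> nat \<lceil>real m * x\<rceil> \<in> {1..<m}"
    then have "real m \<le> real m * x" using False by simp
    then have "int m \<le> \<lceil>real m * x\<rceil>" by (simp add: le_ceiling_iff)
    then show False using h by auto
  qed
  then have "step_approx g m x = 0" for m by (simp only: step_approx_eq if_False)
  then show ?thesis using False by (auto simp: indicator_def)
next
  case True
  then have x: "0 < x" "x < 1" by auto
  define t where "t m = real (nat \<lceil>real m * x\<rceil>) / real m" for m :: nat
  have eventually_range: "\<forall>\<^sub>F m in sequentially. nat \<lceil>real m * x\<rceil> \<in> {1..<m}"
  proof -
    obtain M :: nat where M: "real M > 1 / (1 - x)" using reals_Archimedean2 by blast
    have "real m * (1 - x) > 1" if "m \<ge> M" for m
    proof -
      have "real m > 1 / (1 - x)" using M that by (meson less_le_trans of_nat_le_iff)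
      then show ?thesis using x by (simp add: field_simps)
    qed
    then show ?thesis
      using ceiling_mult_in_range[OF x] by (auto simp: eventually_sequentially)
  qed
  have t_lim: "t \<longlonglongrightarrow> x"
  proof (rule tendsto_sandwich[where f="\<lambda>_. x" and h="\<lambda>m. x + 1 / real m"])
    show "\<forall>\<^sub>F m in sequentially. x \<le> t m"
      using eventually_gt_at_top[of 0] by eventually_elim (use x in \<open>simp add: t_def field_simps\<close>)
    show "\<forall>\<^sub>F m in sequentially. t m \<le> x + 1 / real m"
      using eventually_gt_at_top[of 0]
    proof eventually_elim
      case (elim m)
      have "real (nat \<lceil>real m * x\<rceil>) \<le> real m * x + 1"
        using x elim ceiling_correct[of "real m * x"] by simp
      then show ?case using elim by (simp add: t_def field_simps)
    qed
    have "(\<lambda>m. x + 1 / real m) \<longlonglongrightarrow> x + 0"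
      by (intro tendsto_intros lim_1_over_n)
    then show "(\<lambda>m. x + 1 / real m) \<longlonglongrightarrow> x" by simp
  qed simp
  have "\<forall>\<^sub>F m in sequentially. t m \<in> {0<..<1}"
    using eventually_range by eventually_elim (use x in \<open>auto simp: t_def intro!: divide_pos_pos\<close>)
  then have "(\<lambda>m. g (t m)) \<longlonglongrightarrow> g x"
    using continuous_on_tendsto_compose[OF g t_lim] x by (simp add: o_def)
  moreover have "\<forall>\<^sub>F m in sequentially. step_approx g m x = g (t m)"
    using eventually_range by eventually_elim (use x in \<open>simp add: step_approx_eq t_def\<close>)
  ultimately show ?thesis
    using x by (simp add: tendsto_cong)
qed

lemma step_approx_beta_le:
  fixes a b :: real
  assumes a: "0 < a" "a \<le> 1" and b: "0 < b" "b \<le> 1"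
  defines "g \<equiv> \<lambda>y. y powr (a-1) * (1-y) powr (b-1)"
  shows "step_approx g m x \<le> 2 powr (1-b) * (indicator {0..1} x * g x)"
proof (cases "0 < x \<and> nat \<lceil>real m * x\<rceil> \<in> {1..<m}")
  case False
  then have "step_approx g m x = 0" by (simp only: step_approx_eq if_False)
  then show ?thesis by (simp add: g_def)
next
  case True
  define k where "k = nat \<lceil>real m * x\<rceil>"
  have x: "0 < x" and k: "k \<in> {1..<m}" using True by (auto simp: k_def)
  then have m: "real m > 0" by simp
  have "real k = of_int \<lceil>real m * x\<rceil>" using x m by (simp add: k_def)
  then have lo: "x \<le> real k / real m" and hi: "real k / real m < x + 1 / real m"
    using m ceiling_correct[of "real m * x"] by (simp_all add: field_simps)
  have top: "real k / real m \<le> 1 - 1 / real m" using k m by (simp add: field_simps)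
  \<comment> \<open>so 1 - k/m is at least 1/m and at least 1 - x - 1/m, hence at least (1 - x)/2\<close>
  then have x1: "x < 1" using lo m by (smt (verit) divide_pos_pos)
  have "(real k / real m) powr (a-1) \<le> x powr (a-1)"
    using x lo a by (intro powr_mono2') auto
  moreover have "(1 - real k / real m) powr (b-1) \<le> ((1 - x) / 2) powr (b-1)"
    using hi top x1 b by (intro powr_mono2') auto
  moreover have "((1 - x) / 2) powr (b-1) = 2 powr (1-b) * (1-x) powr (b-1)"
    using x1 by (simp add: powr_divide powr_diff)
  ultimately have "g (real k / real m) \<le> x powr (a-1) * (2 powr (1-b) * (1-x) powr (b-1))"
    unfolding g_def by (intro mult_mono) auto
  moreover have "step_approx g m x = g (real k / real m)"
    using True by (simp add: step_approx_eq k_def)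
  ultimately show ?thesis
    using x x1 by (simp add: indicator_def g_def ac_simps)
qed

lemma beta_riemann_sum_eq_integral:
  fixes a b :: real
  assumes ab: "a + b = 1"
  shows "(\<Sum>i\<in>{1..<m}. real i powr (a-1) * real (m-i) powr (b-1))
    = integral\<^sup>L lborel (step_approx (\<lambda>y. y powr (a-1) * (1-y) powr (b-1)) m)"
proof -
  define g where "g y = y powr (a-1) * (1-y) powr (b-1)" for y :: real
  have "real i powr (a-1) * real (m-i) powr (b-1) = g (real i / real m) / real m"
    if "i \<in> {1..<m}" for i
  proof -
    have m: "real m > 0" using that by auto
    have "g (real i / real m) = (real i / real m) powr (a-1) * (real (m-i) / real m) powr (b-1)"
      using that m by (simp add: g_def of_nat_diff field_simps)
    also have "\<dots> = real i powr (a-1) * real (m-i) powr (b-1) / (real m powr (a-1) * real m powr (b-1))"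
      by (simp add: powr_divide)
    also have "real m powr (a-1) * real m powr (b-1) = 1 / real m"
      using m ab by (simp add: powr_add[symmetric] powr_minus_divide[symmetric])
    finally show ?thesis using m by simp
  qed
  then show ?thesis
    by (simp add: integral_step_approx sum_divide_distrib g_def[abs_def])
qed

lemma beta_riemann_sum_convergent:
  fixes a b :: real
  assumes a: "0 < a" and b: "0 < b" and ab: "a + b = 1"
  shows "convergent (\<lambda>m::nat. \<Sum>i\<in>{1..<m}. real i powr (a-1) * real (m-i) powr (b-1))"
proof -
  define g where "g y = y powr (a-1) * (1-y) powr (b-1)" for y :: real
  define W where "W x = 2 powr (1-b) * (indicator {0..1::real} x * g x)" for x
  have "set_integrable lborel {0..1} g"
    using integrable_Beta[OF a b] unfolding g_def[abs_def] .
  then have "integrable lborel (\<lambda>x. indicator {0..1::real} x * g x)"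
    by (simp add: set_integrable_def)
  then have W: "integrable lborel W"
    unfolding W_def by (rule integrable_mult_right)
  have g: "continuous_on {0<..<1} g"
    unfolding g_def by (intro continuous_intros) auto
  have "(\<lambda>m. integral\<^sup>L lborel (step_approx g m)) \<longlonglongrightarrow> integral\<^sup>L lborel (\<lambda>x. indicator {0<..<1} x * g x)"
  proof (rule integral_dominated_convergence[OF _ _ W])
    have "(\<lambda>x. W x * indicator {0<..<1::real} x / 2 powr (1-b)) \<in> borel_measurable lborel"
      using borel_measurable_integrable[OF W] by measurable
    also have "(\<lambda>x. W x * indicator {0<..<1::real} x / 2 powr (1-b)) = (\<lambda>x. indicator {0<..<1} x * g x)"
      by (auto simp: W_def fun_eq_iff indicator_def)
    finally show "(\<lambda>x. indicator {0<..<1} x * g x) \<in> borel_measurable lborel" .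
    show "step_approx g m \<in> borel_measurable lborel" for m
      unfolding step_approx_def by measurable
    show "AE x in lborel. norm (step_approx g m x) \<le> W x" for m
    proof (rule AE_I2)
      fix x
      have "0 \<le> step_approx g m x"
        unfolding step_approx_def g_def by (intro sum_nonneg) auto
      then show "norm (step_approx g m x) \<le> W x"
        using step_approx_beta_le[of a b m x] a b ab by (simp add: W_def g_def[abs_def])
    qed
    show "AE x in lborel. (\<lambda>m. step_approx g m x) \<longlonglongrightarrow> indicator {0<..<1} x * g x"
      using step_approx_tendsto[OF g] by simp
  qed
  then show ?thesis
    unfolding beta_riemann_sum_eq_integral[OF ab] g_def[symmetric] convergent_def by blast
qed

lemma powr_increment_bounds:
  fixes x y p :: real
  assumes "0 < x" "x < y" "0 < p" "p < 1"
  shows "p * (y - x) * y powr (p-1) \<le> y powr p - x powr p"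
    and "y powr p - x powr p \<le> p * (y - x) * x powr (p-1)"
proof -
  have "\<exists>z>x. z < y \<and> y powr p - x powr p = (y - x) * (p * z powr (p-1))"
    by (rule MVT2[OF assms(2)]) (use assms in \<open>auto intro!: has_real_derivative_powr\<close>)
  then obtain z where z: "x < z" "z < y" "y powr p - x powr p = (y - x) * (p * z powr (p-1))"
    by blast
  have "y powr (p-1) \<le> z powr (p-1)" "z powr (p-1) \<le> x powr (p-1)"
    using z assms by (auto intro!: powr_mono2')
  moreover have "0 \<le> p * (y - x)" using assms by auto
  moreover have "y powr p - x powr p = p * (y - x) * z powr (p-1)" using z(3) by (simp add: algebra_simps)
  ultimately show "p * (y - x) * y powr (p-1) \<le> y powr p - x powr p"
    and "y powr p - x powr p \<le> p * (y - x) * x powr (p-1)"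
    by (simp_all add: mult_left_mono)
qed

lemma sum_powr_le:
  fixes p :: real assumes "0 < p" "p < 1"
  shows "(\<Sum>k=1..n. real k powr (p-1)) \<le> real n powr p / p"
proof (induction n)
  case (Suc n)
  show ?case
  proof (cases "n = 0")
    case False
    have "p * (real (Suc n) - real n) * real (Suc n) powr (p-1) \<le> real (Suc n) powr p - real n powr p"
      using False assms by (intro powr_increment_bounds(1)) auto
    then show ?thesis using Suc.IH assms by (simp add: field_simps)
  qed (use assms in simp)
qed simp

lemma sum_powr_ge:
  fixes p :: real assumes "0 < p" "p < 1"
  shows "(real (Suc n) powr p - 1) / p \<le> (\<Sum>k=1..n. real k powr (p-1))"
proof (induction n)
  case (Suc n)
  have "real (Suc (Suc n)) powr p - real (Suc n) powr p \<le> p * (real (Suc (Suc n)) - real (Suc n)) * real (Suc n) powr (p-1)"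
    using assms by (intro powr_increment_bounds(2)) auto
  then show ?case using Suc.IH assms by (simp add: field_simps)
qed simp

lemma sum_powr_asymptotic:
  fixes p :: real assumes "0 < p" "p < 1"
  shows "(\<lambda>n. (\<Sum>k=1..n. real k powr (p-1)) / real n powr p) \<longlonglongrightarrow> 1 / p"
proof (rule tendsto_sandwich[where f="\<lambda>n. ((real (Suc n) / real n) powr p - 1 / real n powr p) / p" and h="\<lambda>_. 1/p"])
  show "\<forall>\<^sub>F n in sequentially. ((real (Suc n) / real n) powr p - 1 / real n powr p) / p \<le> (\<Sum>k=1..n. real k powr (p-1)) / real n powr p"
    using eventually_gt_at_top[of 0]
  proof eventually_elim
    case (elim n)
    have "(real (Suc n) powr p - 1) / p / real n powr p \<le> (\<Sum>k=1..n. real k powr (p-1)) / real n powr p"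
      using sum_powr_ge[OF assms, of n] elim by (intro divide_right_mono) auto
    then show ?case using elim by (simp add: powr_divide field_simps)
  qed
  show "\<forall>\<^sub>F n in sequentially. (\<Sum>k=1..n. real k powr (p-1)) / real n powr p \<le> 1/p"
    using eventually_gt_at_top[of 0]
  proof eventually_elim
    case (elim n)
    have "(\<Sum>k=1..n. real k powr (p-1)) / real n powr p \<le> real n powr p / p / real n powr p"
      using sum_powr_le[OF assms, of n] elim by (intro divide_right_mono) auto
    then show ?case using elim by simp
  qed
  have "(\<lambda>n. real n powr (-p)) \<longlonglongrightarrow> 0"
    by (rule tendsto_neg_powr) (use assms filterlim_real_sequentially in auto)
  then have "(\<lambda>n. 1 / real n powr p) \<longlonglongrightarrow> 0"
    by (simp add: powr_minus divide_inverse)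
  then have "(\<lambda>n. ((real (Suc n) / real n) powr p - 1 / real n powr p) / p) \<longlonglongrightarrow> ((1 powr p) - 0) / p"
    using assms LIMSEQ_Suc_n_over_n by (intro tendsto_intros) auto
  then show "(\<lambda>n. ((real (Suc n) / real n) powr p - 1 / real n powr p) / p) \<longlonglongrightarrow> 1 / p" by simp
qed simp

lemma convolution_deviation_le:
  fixes r w :: "nat \<Rightarrow> real"
  assumes r: "\<And>j. 0 \<le> r j" "\<And>j. r j \<le> B"
    and w: "\<And>m. \<bar>w m - C\<bar> \<le> D" "\<And>m. M \<le> m \<Longrightarrow> \<bar>w m - C\<bar> \<le> \<epsilon>"
  shows "\<bar>(\<Sum>j\<le>n. r j * w (n - j)) - C * (\<Sum>j\<le>n. r j)\<bar> \<le> \<epsilon> * (\<Sum>j\<le>n. r j) + real M * B * D"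
proof -
  have "\<bar>(\<Sum>j\<le>n. r j * w (n - j)) - C * (\<Sum>j\<le>n. r j)\<bar> = \<bar>\<Sum>j\<le>n. r j * (w (n - j) - C)\<bar>"
    by (simp add: sum_distrib_left sum_subtractf algebra_simps)
  also have "\<dots> \<le> (\<Sum>j\<le>n. r j * \<bar>w (n - j) - C\<bar>)"
    using sum_abs[of "\<lambda>j. r j * (w (n - j) - C)" "{..n}"] r(1) by (simp add: abs_mult)
  also have "\<dots> \<le> (\<Sum>j\<le>n. \<epsilon> * r j + (if n - j < M then B * D else 0))"
  proof (rule sum_mono)
    fix j
    show "r j * \<bar>w (n - j) - C\<bar> \<le> \<epsilon> * r j + (if n - j < M then B * D else 0)"
    proof (cases "n - j < M")
      case True
      have "0 \<le> \<epsilon>" using w order_trans[OF abs_ge_zero w(2)[of M]] by simp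
      have "r j * \<bar>w (n - j) - C\<bar> \<le> B * D"
        by (rule mult_mono) (use r w order_trans[OF r(1) r(2)] in auto)
      then show ?thesis
        using True r(1)[of j] \<open>0 \<le> \<epsilon>\<close> by (simp add: add_increasing)
    next
      case False
      then have "r j * \<bar>w (n - j) - C\<bar> \<le> r j * \<epsilon>"
        using w(2)[of "n - j"] r(1)[of j] by (intro mult_left_mono) auto
      then show ?thesis using False by (simp add: mult.commute)
    qed
  qed
  also have "\<dots> = \<epsilon> * (\<Sum>j\<le>n. r j) + real (card {j\<in>{..n}. n - j < M}) * (B * D)"
    by (simp add: sum.distrib sum_distrib_left sum.inter_filter[symmetric])
  also have "real (card {j\<in>{..n}. n - j < M}) * (B * D) \<le> real M * (B * D)"
  proof (rule mult_right_mono)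
    have "card {j\<in>{..n}. n - j < M} \<le> card {..<M}"
      by (rule card_inj_on_le[where f="\<lambda>j. n - j"]) (auto simp: inj_on_def)
    then show "real (card {j\<in>{..n}. n - j < M}) \<le> real M" by simp
    show "0 \<le> B * D" using r(1)[of 0] r(2)[of 0] order_trans[OF abs_ge_zero w(1)[of 0]] by simp
  qed
  finally show ?thesis by simp
qed

lemma convolution_ratio_tendsto:
  fixes r w :: "nat \<Rightarrow> real"
  assumes r: "\<And>j. 0 \<le> r j" "\<And>j. r j \<le> B"
    and w: "w \<longlonglongrightarrow> C"
    and R: "filterlim (\<lambda>n. \<Sum>j\<le>n. r j) at_top sequentially"
  shows "(\<lambda>n. (\<Sum>j\<le>n. r j * w (n - j)) / (\<Sum>j\<le>n. r j)) \<longlonglongrightarrow> C"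
proof (rule tendstoI)
  fix e :: real assume e: "e > 0"
  have "(\<lambda>m. w m - C) \<longlonglongrightarrow> 0"
    using w by (simp add: LIM_zero)
  then have "Bseq (\<lambda>m. w m - C)"
    by (intro convergent_imp_Bseq convergentI)
  then obtain D where D: "\<And>m. \<bar>w m - C\<bar> \<le> D" by (auto simp: Bseq_def)
  have "\<forall>\<^sub>F m in sequentially. dist (w m) C < e/2"
    using w e by (intro tendstoD) auto
  then obtain M where "\<And>m. M \<le> m \<Longrightarrow> dist (w m) C < e/2"
    by (auto simp: eventually_sequentially)
  then have w_close: "\<And>m. M \<le> m \<Longrightarrow> \<bar>w m - C\<bar> \<le> e/2"
    by (fastforce simp: dist_real_def)
  have "\<forall>\<^sub>F n in sequentially. (\<Sum>j\<le>n. r j) > max 0 (2 * real M * B * D / e)"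
    using R by (simp only: filterlim_at_top_dense)
  then show "\<forall>\<^sub>F n in sequentially. dist ((\<Sum>j\<le>n. r j * w (n - j)) / (\<Sum>j\<le>n. r j)) C < e"
  proof eventually_elim
    case (elim n)
    define Rn where "Rn = (\<Sum>j\<le>n. r j)"
    have Rn: "Rn > 0" "real M * B * D < e/2 * Rn"
      using elim e by (auto simp: Rn_def field_simps)
    have "dist ((\<Sum>j\<le>n. r j * w (n - j)) / Rn) C = \<bar>(\<Sum>j\<le>n. r j * w (n - j)) - C * Rn\<bar> / Rn"
    proof -
      have "(\<Sum>j\<le>n. r j * w (n - j)) / Rn - C = ((\<Sum>j\<le>n. r j * w (n - j)) - C * Rn) / Rn"
        using Rn by (simp add: field_simps)
      then show ?thesis using Rn by (simp add: dist_real_def)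
    qed
    also have "\<dots> \<le> (e/2 * Rn + real M * B * D) / Rn"
      using convolution_deviation_le[of r B w C D M "e/2" n] r D w_close Rn
      by (intro divide_right_mono) (auto simp: Rn_def)
    also have "\<dots> < e"
      using Rn by (simp add: field_simps)
    finally show ?case by (simp add: Rn_def)
  qed
qed

lemma div_ratio_tendsto:
  assumes p: "p \<ge> 1"
  shows "(\<lambda>n. real (n div p) / real n) \<longlonglongrightarrow> 1 / real p"
proof (rule tendsto_sandwich[where f="\<lambda>n. 1 / real p - 1 / real n" and h="\<lambda>_. 1 / real p"])
  show "\<forall>\<^sub>F n in sequentially. 1 / real p - 1 / real n \<le> real (n div p) / real n"
  proof (rule eventually_sequentiallyI[of 1])
    fix n :: nat assume n: "1 \<le> n"
    have "real n = real p * real (n div p) + real (n mod p)"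
      by (metis of_nat_add of_nat_mult div_mult_mod_eq mult.commute)
    moreover have "real (n mod p) < real p" using p by simp
    ultimately have "real n / real p - 1 < real (n div p)"
      using p by (simp add: field_simps)
    then have "(real n / real p - 1) / real n \<le> real (n div p) / real n"
      by (intro divide_right_mono) auto
    moreover have "(real n / real p - 1) / real n = 1 / real p - 1 / real n"
      using n p by (simp add: field_simps)
    ultimately show "1 / real p - 1 / real n \<le> real (n div p) / real n" by simp
  qed
  show "\<forall>\<^sub>F n in sequentially. real (n div p) / real n \<le> 1 / real p"
  proof (rule eventually_sequentiallyI[of 1])
    fix n :: nat assume n: "1 \<le> n"
    have "real (n div p) * real p \<le> real n"
      by (metis of_nat_le_iff of_nat_mult div_times_less_eq_dividend)
    then show "real (n div p) / real n \<le> 1 / real p" using n p by (simp add: field_simps)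
  qed
  have "(\<lambda>n. 1 / real p - 1 / real n) \<longlonglongrightarrow> 1 / real p - 0"
    by (intro tendsto_intros lim_1_over_n)
  then show "(\<lambda>n. 1 / real p - 1 / real n) \<longlonglongrightarrow> 1 / real p" by simp
qed simp

lemma div_ratio_inverse_tendsto:
  assumes p: "p \<ge> 1"
  shows "(\<lambda>n. real n / real (n div p)) \<longlonglongrightarrow> real p"
proof -
  have "(\<lambda>n. 1 / (real (n div p) / real n)) \<longlonglongrightarrow> 1 / (1 / real p)"
    by (rule tendsto_divide[OF tendsto_const div_ratio_tendsto[OF p]]) (use p in auto)
  then show ?thesis by simp
qed

lemma powr_increment_scaled_ge:
  fixes p \<beta> :: real
  assumes p: "0 < p" and \<beta>: "0 < \<beta>" "\<beta> < 1"
  shows "\<beta> - \<beta> / (p + 1) \<le> p * ((1 + 1/p) powr \<beta> - 1)"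
proof -
  have "(1 + 1/p) powr (-1) \<le> (1 + 1/p) powr (\<beta> - 1)"
    by (rule powr_mono) (use p \<beta> in auto)
  moreover have "(1 + 1/p) powr (-1) = p / (p + 1)"
    using p by (simp add: powr_minus field_simps)
  ultimately have "\<beta> * (1/p) * (p / (p + 1)) \<le> \<beta> * (1/p) * (1 + 1/p) powr (\<beta> - 1)"
    using p \<beta> by (intro mult_left_mono) auto
  also have "\<dots> \<le> (1 + 1/p) powr \<beta> - 1"
    using powr_increment_bounds(1)[of 1 "1 + 1/p" \<beta>] p \<beta> by simp
  finally have "\<beta> * (1/p) * (p / (p + 1)) \<le> (1 + 1/p) powr \<beta> - 1" .
  then have "p * (\<beta> / (p + 1)) \<le> p * ((1 + 1/p) powr \<beta> - 1)"
    using p by (intro mult_left_mono) auto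
  moreover have "p * (\<beta> / (p + 1)) = \<beta> - \<beta> / (p + 1)"
    using p by (simp add: field_simps)
  ultimately show ?thesis by simp
qed

lemma powr_decrement_scaled_le:
  fixes p \<beta> :: real
  assumes p: "1 < p" and \<beta>: "0 < \<beta>" "\<beta> < 1"
  shows "p * (1 - (1 - 1/p) powr \<beta>) \<le> \<beta> + \<beta> / (p - 1)"
proof -
  have x: "0 < 1 - 1/p" "1 - 1/p < 1" using p by (auto simp: field_simps)
  have "1 - (1 - 1/p) powr \<beta> \<le> \<beta> * (1/p) * (1 - 1/p) powr (\<beta> - 1)"
    using powr_increment_bounds(2)[OF x \<beta>] by simp
  also have "(1 - 1/p) powr (\<beta> - 1) \<le> (1 - 1/p) powr (-1)"
    using x \<beta> powr_mono'[of "-1" "\<beta> - 1" "1 - 1/p"] by simp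
  then have "\<beta> * (1/p) * (1 - 1/p) powr (\<beta> - 1) \<le> \<beta> * (1/p) * (1 - 1/p) powr (-1)"
    using p \<beta> by (intro mult_left_mono) auto
  also have "\<beta> * (1/p) * (1 - 1/p) powr (-1) = \<beta> / (p - 1)"
    using p x by (simp add: powr_minus field_simps)
  finally have "p * (1 - (1 - 1/p) powr \<beta>) \<le> p * (\<beta> / (p - 1))"
    using p by (intro mult_left_mono) auto
  also have "\<dots> = \<beta> + \<beta> / (p - 1)" using p by (simp add: field_simps)
  finally show ?thesis .
qed

lemma powr_scaled_difference:
  fixes n N :: nat and \<beta> X Y d :: real
  assumes "n \<ge> 1" "N \<ge> 1"
  shows "real n powr (1 - \<beta>) * (X - Y) / d
    = (real n / d) * (X / real N powr \<beta> * (real N / real n) powr \<beta> - Y / real n powr \<beta>)"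
  using assms by (simp add: powr_divide powr_diff field_simps)

lemma sum_atMost_diff:
  fixes r :: "nat \<Rightarrow> 'a::ab_group_add"
  assumes "m \<le> n"
  shows "(\<Sum>j\<le>n. r j) - (\<Sum>j\<le>m. r j) = (\<Sum>j\<in>{m<..n}. r j)"
proof -
  from assms have "{..n} = {..m} \<union> {m<..n}" by auto
  then have "(\<Sum>j\<le>n. r j) = (\<Sum>j\<le>m. r j) + (\<Sum>j\<in>{m<..n}. r j)"
    by (simp only:) (rule sum.union_disjoint, auto)
  then show ?thesis by simp
qed

text \<open>A discrete monotone density theorem: r(n) is squeezed between the averages of r over
  (n, n + n/p] and (n - n/p, n], which are difference quotients of A x^\<beta>; letting p \<rightarrow> \<infinity>
  recovers its derivative.\<close>

context
  fixes r :: "nat \<Rightarrow> real" and \<beta> A :: real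
  assumes \<beta>: "0 < \<beta>" "\<beta> < 1"
    and r_nonneg: "\<And>n. 0 \<le> r n"
    and r_antimono: "\<And>m n. m \<le> n \<Longrightarrow> r n \<le> r m"
    and partial_sums: "(\<lambda>n. (\<Sum>j\<le>n. r j) / real n powr \<beta>) \<longlonglongrightarrow> A"
begin

abbreviation \<rho> :: "nat \<Rightarrow> real" where
  "\<rho> n \<equiv> (\<Sum>j\<le>n. r j) / real n powr \<beta>"

lemma density_lower_estimate:
  assumes n: "n \<ge> 1" and d: "d \<ge> 1"
  shows "(real n / real d) * (\<rho> (n + d) * (real (n + d) / real n) powr \<beta> - \<rho> n) \<le> real n powr (1 - \<beta>) * r n"
proof -
  have "(\<Sum>j\<le>n + d. r j) - (\<Sum>j\<le>n. r j) = (\<Sum>j\<in>{n<..n + d}. r j)"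
    by (rule sum_atMost_diff) simp
  also have "\<dots> \<le> real d * r n"
    using sum_bounded_above[of "{n<..n + d}" r "r n"] r_antimono by simp
  finally have "((\<Sum>j\<le>n + d. r j) - (\<Sum>j\<le>n. r j)) / real d \<le> r n"
    using d by (simp add: field_simps)
  then have "real n powr (1 - \<beta>) * ((\<Sum>j\<le>n + d. r j) - (\<Sum>j\<le>n. r j)) / real d \<le> real n powr (1 - \<beta>) * r n"
    by (simp add: mult_left_mono times_divide_eq_right[symmetric] del: times_divide_eq_right)
  then show ?thesis
    using powr_scaled_difference[of n "n + d" \<beta> "\<Sum>j\<le>n + d. r j" "\<Sum>j\<le>n. r j" "real d"] n by simp
qed

lemma density_upper_estimate:
  assumes n: "n \<ge> 1" and d: "d \<ge> 1" "d < n"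
  shows "real n powr (1 - \<beta>) * r n \<le> (real n / real d) * (\<rho> n - \<rho> (n - d) * (real (n - d) / real n) powr \<beta>)"
proof -
  have "real d * r n \<le> (\<Sum>j\<in>{n - d<..n}. r j)"
    using sum_bounded_below[of "{n - d<..n}" "r n" r] r_antimono d by simp
  also have "\<dots> = (\<Sum>j\<le>n. r j) - (\<Sum>j\<le>n - d. r j)"
    by (rule sum_atMost_diff[symmetric]) simp
  finally have "r n \<le> ((\<Sum>j\<le>n. r j) - (\<Sum>j\<le>n - d. r j)) / real d"
    using d by (simp add: field_simps)
  then have "real n powr (1 - \<beta>) * r n \<le> real n powr (1 - \<beta>) * (((\<Sum>j\<le>n. r j) - (\<Sum>j\<le>n - d. r j)) / real d)"
    by (rule mult_left_mono) simp
  also have "\<dots> = - (real n powr (1 - \<beta>) * ((\<Sum>j\<le>n - d. r j) - (\<Sum>j\<le>n. r j)) / real d)"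
    by (simp add: right_diff_distrib diff_divide_distrib)
  also have "real n powr (1 - \<beta>) * ((\<Sum>j\<le>n - d. r j) - (\<Sum>j\<le>n. r j)) / real d
      = (real n / real d) * (\<rho> (n - d) * (real (n - d) / real n) powr \<beta> - \<rho> n)"
    by (rule powr_scaled_difference) (use n d in auto)
  finally show ?thesis by (simp add: right_diff_distrib)
qed

lemma density_lower_tendsto:
  assumes p: "p \<ge> (2::nat)"
  shows "(\<lambda>n. (real n / real (n div p)) * (\<rho> (n + n div p) * (real (n + n div p) / real n) powr \<beta> - \<rho> n))
     \<longlonglongrightarrow> real p * (A * (1 + 1 / real p) powr \<beta> - A)"
proof -
  have q: "(\<lambda>n. real (n div p) / real n) \<longlonglongrightarrow> 1 / real p" using p by (intro div_ratio_tendsto) auto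
  have l1: "(\<lambda>n. real n / real (n div p)) \<longlonglongrightarrow> real p" using p by (intro div_ratio_inverse_tendsto) auto
  have "(\<lambda>n. 1 + real (n div p) / real n) \<longlonglongrightarrow> 1 + 1 / real p" by (intro tendsto_intros q)
  then have l2: "(\<lambda>n. real (n + n div p) / real n) \<longlonglongrightarrow> 1 + 1 / real p"
    by (rule Lim_transform_eventually) (auto intro!: eventually_sequentiallyI[of 1] simp: field_simps)
  have f: "filterlim (\<lambda>n. n + n div p) sequentially sequentially"
    by (rule filterlim_at_top_mono[OF filterlim_ident]) auto
  have l3: "(\<lambda>n. \<rho> (n + n div p)) \<longlonglongrightarrow> A"
    using filterlim_compose[OF partial_sums f] .
  show ?thesis
    by (intro tendsto_intros l1 l2 l3 partial_sums) (use p \<beta> in auto)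
qed

lemma density_upper_tendsto:
  assumes p: "p \<ge> (2::nat)"
  shows "(\<lambda>n. (real n / real (n div p)) * (\<rho> n - \<rho> (n - n div p) * (real (n - n div p) / real n) powr \<beta>))
     \<longlonglongrightarrow> real p * (A - A * (1 - 1 / real p) powr \<beta>)"
proof -
  have q: "(\<lambda>n. real (n div p) / real n) \<longlonglongrightarrow> 1 / real p" using p by (intro div_ratio_tendsto) auto
  have l1: "(\<lambda>n. real n / real (n div p)) \<longlonglongrightarrow> real p" using p by (intro div_ratio_inverse_tendsto) auto
  have "(\<lambda>n. 1 - real (n div p) / real n) \<longlonglongrightarrow> 1 - 1 / real p" by (intro tendsto_intros q)
  then have l2: "(\<lambda>n. real (n - n div p) / real n) \<longlonglongrightarrow> 1 - 1 / real p"
    by (rule Lim_transform_eventually) (auto intro!: eventually_sequentiallyI[of 1] simp: field_simps of_nat_diff)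
  have f: "filterlim (\<lambda>n. n - n div p) sequentially sequentially"
    unfolding filterlim_at_top
  proof
    fix Z :: nat
    show "\<forall>\<^sub>F n in sequentially. Z \<le> n - n div p"
    proof (rule eventually_sequentiallyI[of "2 * Z"])
      fix n assume n: "2 * Z \<le> n"
      have "n div p \<le> n div 2" using p by (intro div_le_mono2) auto
      then show "Z \<le> n - n div p" using n by linarith
    qed
  qed
  have l3: "(\<lambda>n. \<rho> (n - n div p)) \<longlonglongrightarrow> A"
    using filterlim_compose[OF partial_sums f] .
  show ?thesis
    by (intro tendsto_intros l1 l2 l3 partial_sums) (use p in auto)
qed

lemma partial_sums_limit_nonneg: "0 \<le> A"
  by (rule LIMSEQ_le_const[OF partial_sums]) (auto intro!: exI[of _ 0] divide_nonneg_nonneg sum_nonneg r_nonneg)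

theorem monotone_density_tendsto: "(\<lambda>n. real n powr (1 - \<beta>) * r n) \<longlonglongrightarrow> \<beta> * A"
proof (rule tendstoI)
  fix e :: real assume e: "e > 0"
  define K where "K = \<beta> * A"
  have K: "0 \<le> K" using \<beta> partial_sums_limit_nonneg by (simp add: K_def)
  define p where "p = nat \<lceil>2 * K / e\<rceil> + 2"
  have p: "p \<ge> 2" "real p - 1 > 2 * K / e"
    unfolding p_def by linarith+
  then have K_small: "K / (real p + 1) \<le> K / (real p - 1)" "K / (real p - 1) < e / 2"
    using K e by (auto intro!: divide_left_mono simp: field_simps)
  have lo: "K - K / (real p + 1) \<le> real p * (A * (1 + 1 / real p) powr \<beta> - A)"
    using mult_left_mono[OF powr_increment_scaled_ge[of "real p" \<beta>] partial_sums_limit_nonneg] p \<beta>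
    by (simp add: K_def algebra_simps)
  have hi: "real p * (A - A * (1 - 1 / real p) powr \<beta>) \<le> K + K / (real p - 1)"
    using mult_left_mono[OF powr_decrement_scaled_le[of "real p" \<beta>] partial_sums_limit_nonneg] p \<beta>
    by (simp add: K_def algebra_simps)
  have "\<forall>\<^sub>F n in sequentially. real p * (A * (1 + 1 / real p) powr \<beta> - A) - e/2
      < (real n / real (n div p)) * (\<rho> (n + n div p) * (real (n + n div p) / real n) powr \<beta> - \<rho> n)"
    using density_lower_tendsto[OF p(1)] e by (intro order_tendstoD(1)) auto
  moreover have "\<forall>\<^sub>F n in sequentially.
      (real n / real (n div p)) * (\<rho> n - \<rho> (n - n div p) * (real (n - n div p) / real n) powr \<beta>)
      < real p * (A - A * (1 - 1 / real p) powr \<beta>) + e/2"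
    using density_upper_tendsto[OF p(1)] e by (intro order_tendstoD(2)) auto
  moreover have "\<forall>\<^sub>F n in sequentially. p \<le> n" by (rule eventually_ge_at_top)
  ultimately show "\<forall>\<^sub>F n in sequentially. dist (real n powr (1 - \<beta>) * r n) (\<beta> * A) < e"
  proof eventually_elim
    case (elim n)
    then have n: "n \<ge> 1" "n div p \<ge> 1" "n div p < n"
      using p by (simp_all add: Suc_le_eq div_greater_zero_iff)
    show ?case
      using density_lower_estimate[OF n(1,2)] density_upper_estimate[OF n] elim lo hi K_small
      unfolding dist_real_def abs_less_iff K_def by linarith
  qed
qed

end

lemma tail_sum_le_expectation:
  fixes T :: "nat pmf"
  shows "ennreal (\<Sum>j\<le>n. measure_pmf.prob T {k. j < k}) \<le> (\<integral>\<^sup>+ k. ennreal (real k) \<partial>measure_pmf T)"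
proof -
  have "ennreal (\<Sum>j\<le>n. measure_pmf.prob T {k. j < k}) = (\<Sum>j\<le>n. \<integral>\<^sup>+ k. indicator {k. j < k} k \<partial>measure_pmf T)"
    by (simp add: sum_ennreal[symmetric] measure_pmf.emeasure_eq_measure del: sum_ennreal)
  also have "\<dots> = (\<integral>\<^sup>+ k. (\<Sum>j\<le>n. indicator {k. j < k} k) \<partial>measure_pmf T)"
    by (rule nn_integral_sum[symmetric]) simp
  also have "\<dots> \<le> (\<integral>\<^sup>+ k. ennreal (real k) \<partial>measure_pmf T)"
  proof (rule nn_integral_mono)
    fix k :: nat
    have "(\<Sum>j\<le>n. indicator {k. j < k} k :: ennreal) = (\<Sum>j\<le>n. if j < k then 1 else 0)"
      by (intro sum.cong) (auto simp: indicator_def)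
    also have "\<dots> = of_nat (card {j\<in>{..n}. j < k})"
      by (simp add: sum.inter_filter[symmetric])
    also have "card {j\<in>{..n}. j < k} \<le> card {..<k}"
      by (rule card_mono) auto
    then have "(of_nat (card {j\<in>{..n}. j < k}) :: ennreal) \<le> of_nat k" by simp
    finally show "(\<Sum>j\<le>n. indicator {k. j < k} k :: ennreal) \<le> ennreal (real k)"
      by (simp add: ennreal_of_nat_eq_real_of_nat)
  qed
  finally show ?thesis .
qed

lemma expectation_infinite_if_tail_sums_diverge:
  fixes T :: "nat pmf"
  assumes "filterlim (\<lambda>n. \<Sum>j\<le>n. measure_pmf.prob T {k. j < k}) at_top sequentially"
  shows "(\<integral>\<^sup>+ k. ennreal (real k) \<partial>measure_pmf T) = \<infinity>"
proof (rule ccontr)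
  assume "(\<integral>\<^sup>+ k. ennreal (real k) \<partial>measure_pmf T) \<noteq> \<infinity>"
  then obtain y where y: "(\<integral>\<^sup>+ k. ennreal (real k) \<partial>measure_pmf T) = ennreal y" "y \<ge> 0"
    by (cases "\<integral>\<^sup>+ k. ennreal (real k) \<partial>measure_pmf T" rule: ennreal_cases) auto
  obtain n where "(\<Sum>j\<le>n. measure_pmf.prob T {k. j < k}) > y"
    using assms by (auto simp: filterlim_at_top_dense eventually_sequentially)
  moreover have "(\<Sum>j\<le>n. measure_pmf.prob T {k. j < k}) \<le> y"
    using tail_sum_le_expectation[of T n] y by (simp add: ennreal_le_iff)
  ultimately show False by simp
qed

lemma tendsto_floor_scaled:
  fixes g :: "nat \<Rightarrow> real"
  assumes "(\<lambda>n. real n powr a * g n) \<longlonglongrightarrow> K"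
  shows "((\<lambda>t. t powr a * g (nat \<lfloor>t\<rfloor>)) \<longlongrightarrow> K) at_top"
proof -
  define n where "n t = nat \<lfloor>t\<rfloor>" for t :: real
  have n: "filterlim n sequentially at_top"
    unfolding n_def by (rule filterlim_compose[OF filterlim_nat_sequentially filterlim_floor_sequentially])
  have ratio: "((\<lambda>t. t / real (n t)) \<longlongrightarrow> 1) at_top"
  proof (rule tendsto_sandwich[where f="\<lambda>_. 1" and h="\<lambda>t. 1 + 1 / real (n t)"])
    have bounds: "1 \<le> t / real (n t) \<and> t / real (n t) \<le> 1 + 1 / real (n t)" if "t \<ge> 1" for t
    proof -
      have "real (n t) = of_int \<lfloor>t\<rfloor>" "of_int \<lfloor>t\<rfloor> \<ge> (1::real)"
        using that by (simp_all add: n_def le_floor_iff)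
      moreover have "of_int \<lfloor>t\<rfloor> \<le> t" "t < of_int \<lfloor>t\<rfloor> + 1"
        by (rule of_int_floor_le, rule real_of_int_floor_add_one_gt)
      ultimately show ?thesis by (simp add: field_simps)
    qed
    show "\<forall>\<^sub>F t in at_top. 1 \<le> t / real (n t)" "\<forall>\<^sub>F t in at_top. t / real (n t) \<le> 1 + 1 / real (n t)"
      by (rule eventually_mono[OF eventually_ge_at_top[of 1]], use bounds in blast)+
    have "((\<lambda>t. 1 + 1 / real (n t)) \<longlongrightarrow> 1 + 0) at_top"
      by (intro tendsto_intros filterlim_compose[OF lim_1_over_n n])
    then show "((\<lambda>t. 1 + 1 / real (n t)) \<longlongrightarrow> 1) at_top" by simp
  qed simp
  have "((\<lambda>t. real (n t) powr a * g (n t) * (t / real (n t)) powr a) \<longlongrightarrow> K * 1 powr a) at_top"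
    by (intro tendsto_intros filterlim_compose[OF assms n] ratio) simp
  then have "((\<lambda>t. real (n t) powr a * g (n t) * (t / real (n t)) powr a) \<longlongrightarrow> K) at_top"
    by simp
  moreover have "\<forall>\<^sub>F t in at_top. real (n t) powr a * g (n t) * (t / real (n t)) powr a = t powr a * g (n t)"
    using eventually_ge_at_top[of "1::real"]
  proof eventually_elim
    case (elim t)
    then have "real (n t) > 0" by (simp add: n_def)
    then show ?case using elim by (simp add: powr_divide)
  qed
  ultimately show ?thesis
    unfolding n_def by (rule Lim_transform_eventually)
qed

lemma slowly_varying_if_tendsto:
  assumes pos: "\<And>x. 0 < x \<Longrightarrow> 0 < L x" and meas: "L \<in> borel_measurable borel"
    and lim: "(L \<longlongrightarrow> K) at_top" and K: "0 < K"
  shows "slowly_varying L"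
  unfolding slowly_varying_def
proof (intro conjI allI impI pos meas)
  fix lam :: real assume "lam > 0"
  then have "filterlim (\<lambda>t. lam * t) at_top at_top"
    by (intro filterlim_tendsto_pos_mult_at_top[OF tendsto_const _ filterlim_ident])
  then have "((\<lambda>t. L (lam * t) / L t) \<longlongrightarrow> K / K) at_top"
    using K by (intro tendsto_divide filterlim_compose[OF lim] lim) auto
  then show "((\<lambda>t. L (lam * t) / L t) \<longlongrightarrow> 1) at_top" using K by simp
qed

lemma filterlim_powr_sequentially: "0 < p \<Longrightarrow> filterlim (\<lambda>n. real n powr p) at_top sequentially"
proof -
  assume p: "0 < p"
  have "(\<lambda>n. real n powr (-p)) \<longlonglongrightarrow> 0"
    by (rule tendsto_neg_powr) (use p filterlim_real_sequentially in auto)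
  moreover have "\<forall>\<^sub>F n in sequentially. 0 < real n powr (-p)"
    by (auto simp: eventually_sequentially intro!: exI[of _ 1])
  ultimately have "filterlim (\<lambda>n. inverse (real n powr (-p))) at_top sequentially"
    by (rule filterlim_inverse_at_top)
  then show ?thesis by (simp add: powr_minus)
qed

locale gbp_return_time =
  fixes H c :: real and T :: "nat pmf"
  assumes H: "1/2 < H" "H < 1" and c_pos: "0 < c"
    and pmf_0: "pmf T 0 = 0"
    and pmf_1: "pmf T 1 = c * Lcirc H {1, 2}"
    and pmf_ge2: "\<And>k. k \<ge> 2 \<Longrightarrow> pmf T k = c * Dcirc H c {1, k + 1} {2..k}"
begin

text \<open>u n is P(X*_n = 1) in the GBP-II* process, i.e. the renewal sequence whose inter-arrival
  law is T.\<close>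

definition u :: "nat \<Rightarrow> real" where
  "u n = (if n = 0 then 1 else c * real n powr (2*H-2))"

definition tail :: "nat \<Rightarrow> real" where
  "tail n = measure_pmf.prob T {k. n < k}"

lemma pmf_eq_Dgap: "0 < k \<Longrightarrow> pmf T k = c * Dgap H c k"
proof (cases "k = 1")
  case True
  then show ?thesis using pmf_1 by (simp add: Lcirc_doubleton Dgap_def Dcirc_def)
next
  case False
  moreover assume "0 < k"
  moreover have "{2..k} = {Suc 1..<1 + k}" by auto
  ultimately show ?thesis using pmf_ge2[of k] Dcirc_gap_eq_Dgap[of H c 1 k] by simp
qed

lemma pmf_renewal:
  assumes "0 < k"
  shows "pmf T k = u k - (\<Sum>i\<in>{1..<k}. u i * pmf T (k - i))"
proof -
  have "(\<Sum>i\<in>{1..<k}. u i * pmf T (k - i)) = c * (c * (\<Sum>i\<in>{1..<k}. real i powr (2*H-2) * Dgap H c (k - i)))"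
    by (simp add: sum_distrib_left u_def pmf_eq_Dgap mult.assoc mult.left_commute)
  then show ?thesis
    using Dgap_rec[of k H c] assms by (simp add: pmf_eq_Dgap u_def right_diff_distrib)
qed

lemma tail_eq: "tail n = 1 - (\<Sum>k\<le>n. pmf T k)"
proof -
  have "{k. n < k} = UNIV - {..n}" by auto
  then show ?thesis
    using measure_pmf.prob_compl[of "{..n}" T] by (simp add: tail_def measure_measure_pmf_finite)
qed

lemma tail_convolution: "(\<Sum>j\<le>n. tail j * (\<Sum>i\<le>n - j. u i * g (n - j - i))) = (\<Sum>k\<le>n. g k)"
  unfolding tail_eq by (rule renewal_tail_convolution) (use pmf_renewal pmf_0 in \<open>auto simp: u_def\<close>)

lemma tail_nonneg: "0 \<le> tail n" and tail_le_1: "tail n \<le> 1"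
  by (simp_all add: tail_def)

lemma tail_antimono: "m \<le> n \<Longrightarrow> tail n \<le> tail m"
  unfolding tail_def by (rule measure_pmf.finite_measure_mono) auto

lemma tail_0: "tail 0 = 1"
  using pmf_0 by (simp add: tail_eq)

definition v :: "nat \<Rightarrow> real" where
  "v k = (if k = 0 then 0 else real k powr (1 - 2*H))"

definition beta_sum :: "nat \<Rightarrow> real" where
  "beta_sum m = (\<Sum>i\<in>{1..<m}. real i powr (2*H-2) * real (m - i) powr (1 - 2*H))"

text \<open>lim beta_sum is the Beta integral B(2H-1, 2-2H) (see beta_riemann_sum_convergent); only its
  positivity is used.\<close>

definition \<kappa> :: real where
  "\<kappa> = c * lim beta_sum"

lemma u_convolution_v: "m \<ge> 1 \<Longrightarrow> (\<Sum>i\<le>m. u i * v (m - i)) = v m + c * beta_sum m"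
proof -
  assume m: "m \<ge> 1"
  then have "{..m} = insert 0 (insert m {1..<m})" by auto
  with m have "(\<Sum>i\<le>m. u i * v (m - i)) = v m + (\<Sum>i\<in>{1..<m}. u i * v (m - i))"
    by (simp add: u_def v_def)
  also have "(\<Sum>i\<in>{1..<m}. u i * v (m - i)) = c * beta_sum m"
    unfolding beta_sum_def sum_distrib_left by (rule sum.cong) (auto simp: u_def v_def)
  finally show ?thesis .
qed

lemma beta_sum_ge: "m \<ge> 2 \<Longrightarrow> 1/2 \<le> beta_sum m"
proof -
  assume m: "m \<ge> 2"
  have "(\<Sum>i\<in>{1..<m}. real m powr (2*H-2) * real m powr (1 - 2*H)) \<le> beta_sum m"
    unfolding beta_sum_def
  proof (rule sum_mono)
    fix i assume i: "i \<in> {1..<m}"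
    have "real m powr (2*H-2) \<le> real i powr (2*H-2)" "real m powr (1 - 2*H) \<le> real (m - i) powr (1 - 2*H)"
      using i H by (auto intro!: powr_mono2')
    then show "real m powr (2*H-2) * real m powr (1 - 2*H) \<le> real i powr (2*H-2) * real (m - i) powr (1 - 2*H)"
      by (intro mult_mono) auto
  qed
  moreover have "real m powr (2*H-2) * real m powr (1 - 2*H) = 1 / real m"
    using m by (simp add: powr_add[symmetric] powr_minus_divide[symmetric])
  ultimately have "(real m - 1) / real m \<le> beta_sum m" using m by (simp add: of_nat_diff)
  moreover have "1/2 \<le> (real m - 1) / real m" using m by (simp add: field_simps)
  ultimately show ?thesis by linarith
qed

lemma \<kappa>_pos: "0 < \<kappa>"
  and u_convolution_v_tendsto: "(\<lambda>m. \<Sum>i\<le>m. u i * v (m - i)) \<longlonglongrightarrow> \<kappa>"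
proof -
  have "convergent beta_sum"
    using beta_riemann_sum_convergent[of "2*H - 1" "2 - 2*H"] H by (simp add: beta_sum_def[abs_def])
  then have lim: "beta_sum \<longlonglongrightarrow> lim beta_sum"
    by (simp add: convergent_LIMSEQ_iff)
  then have "1/2 \<le> lim beta_sum"
    by (rule LIMSEQ_le_const) (use beta_sum_ge in \<open>auto intro!: exI[of _ 2]\<close>)
  then show "0 < \<kappa>" using c_pos by (simp add: \<kappa>_def)
  have "(\<lambda>k. real k powr (1 - 2*H)) \<longlonglongrightarrow> 0"
    by (rule tendsto_neg_powr) (use H filterlim_real_sequentially in auto)
  then have "v \<longlonglongrightarrow> 0"
    by (rule Lim_transform_eventually) (auto simp: v_def eventually_sequentially intro!: exI[of _ 1])
  then have "(\<lambda>m. v m + c * beta_sum m) \<longlonglongrightarrow> 0 + \<kappa>"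
    unfolding \<kappa>_def by (intro tendsto_intros lim)
  then have "(\<lambda>m. v m + c * beta_sum m) \<longlonglongrightarrow> \<kappa>" by simp
  then show "(\<lambda>m. \<Sum>i\<le>m. u i * v (m - i)) \<longlonglongrightarrow> \<kappa>"
    by (rule Lim_transform_eventually[OF _ eventually_sequentiallyI[of 1]]) (simp add: u_convolution_v)
qed

lemma partial_tail_sums_asymptotic:
  "(\<lambda>n. (\<Sum>j\<le>n. tail j) / real n powr (2 - 2*H)) \<longlonglongrightarrow> 1 / ((2 - 2*H) * \<kappa>)"
proof -
  define V where "V n = (\<Sum>k\<le>n. v k)" for n
  define R where "R n = (\<Sum>j\<le>n. tail j)" for n
  have \<beta>: "0 < 2 - 2*H" "2 - 2*H < 1" using H by auto
  have V_eq: "V n = (\<Sum>k=1..n. real k powr ((2 - 2*H) - 1))" for n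
    by (simp add: V_def v_def atMost_atLeast0 sum.atLeast_Suc_atMost)
  have V_asymp: "(\<lambda>n. V n / real n powr (2 - 2*H)) \<longlonglongrightarrow> 1 / (2 - 2*H)"
    unfolding V_eq by (rule sum_powr_asymptotic[OF \<beta>])
  have V_conv: "V n = (\<Sum>j\<le>n. tail j * (\<Sum>i\<le>n - j. u i * v (n - j - i)))" for n
    unfolding V_def by (rule tail_convolution[symmetric])
  obtain B where B: "\<And>m. (\<Sum>i\<le>m. u i * v (m - i)) \<le> B"
    using convergent_imp_Bseq[OF convergentI[OF u_convolution_v_tendsto]]
    by (auto simp: Bseq_def abs_le_iff)
  have "filterlim (\<lambda>n. V n / real n powr (2 - 2*H) * real n powr (2 - 2*H)) at_top sequentially"
    using \<beta> by (intro filterlim_tendsto_pos_mult_at_top[OF V_asymp] filterlim_powr_sequentially) auto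
  then have V_at_top: "filterlim V at_top sequentially"
    by (rule filterlim_at_top_mono) (auto simp: eventually_sequentially intro!: exI[of _ 1])
  have "V n \<le> max 1 B * R n" for n
  proof -
    have "V n \<le> (\<Sum>j\<le>n. tail j * max 1 B)"
      unfolding V_conv
    proof (rule sum_mono)
      fix j
      have "(\<Sum>i\<le>n - j. u i * v (n - j - i)) \<le> max 1 B"
        by (rule order_trans[OF B[of "n - j"]]) simp
      then show "tail j * (\<Sum>i\<le>n - j. u i * v (n - j - i)) \<le> tail j * max 1 B"
        by (rule mult_left_mono) (rule tail_nonneg)
    qed
    then show ?thesis by (simp add: R_def sum_distrib_left mult.commute)
  qed
  then have R_at_top: "filterlim R at_top sequentially"
    by (intro filterlim_at_top_mono[OF filterlim_tendsto_pos_mult_at_top[OF tendsto_const _ V_at_top],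
          of "1 / max 1 B"]) (auto simp: field_simps)
  have ratio: "(\<lambda>n. V n / R n) \<longlonglongrightarrow> \<kappa>"
    unfolding V_conv R_def
    by (rule convolution_ratio_tendsto[OF tail_nonneg tail_le_1 u_convolution_v_tendsto R_at_top[unfolded R_def]])
  have "(\<lambda>n. (V n / real n powr (2 - 2*H)) / (V n / R n)) \<longlonglongrightarrow> (1 / (2 - 2*H)) / \<kappa>"
    using \<kappa>_pos by (intro tendsto_divide V_asymp ratio) auto
  moreover have "\<forall>\<^sub>F n in sequentially. (V n / real n powr (2 - 2*H)) / (V n / R n) = R n / real n powr (2 - 2*H)"
  proof (rule eventually_sequentiallyI[of 1])
    fix n :: nat assume "1 \<le> n"
    then have "v 1 \<le> V n" unfolding V_def by (intro member_le_sum) (auto simp: v_def)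
    moreover have "tail 0 \<le> R n" unfolding R_def by (intro member_le_sum) (auto simp: tail_nonneg)
    ultimately have "V n \<noteq> 0" "R n \<noteq> 0" by (auto simp: v_def tail_0)
    then show "(V n / real n powr (2 - 2*H)) / (V n / R n) = R n / real n powr (2 - 2*H)"
      by simp
  qed
  ultimately show ?thesis
    unfolding R_def by (simp add: Lim_transform_eventually)
qed

lemma tail_asymptotic: "(\<lambda>n. real n powr (2*H - 1) * tail n) \<longlonglongrightarrow> 1 / \<kappa>"
  using monotone_density_tendsto[OF _ _ tail_nonneg tail_antimono partial_tail_sums_asymptotic] H \<kappa>_pos
  by simp

lemma tail_pos: "0 < tail n"
proof -
  have "\<forall>\<^sub>F m in sequentially. 0 < real m powr (2*H - 1) * tail m"
    by (rule order_tendstoD(1)[OF tail_asymptotic]) (use \<kappa>_pos in simp)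
  then obtain N where "\<And>m. N \<le> m \<Longrightarrow> 0 < real m powr (2*H - 1) * tail m"
    by (auto simp: eventually_sequentially)
  then have "0 < tail (max N n)"
    using tail_nonneg[of "max N n"] by (force simp: zero_less_mult_iff)
  then show ?thesis
    using tail_antimono[of n "max N n"] by simp
qed

lemma expectation_infinite: "(\<integral>\<^sup>+ k. ennreal (real k) \<partial>measure_pmf T) = \<infinity>"
proof (rule expectation_infinite_if_tail_sums_diverge)
  have "filterlim (\<lambda>n. (\<Sum>j\<le>n. tail j) / real n powr (2 - 2*H) * real n powr (2 - 2*H)) at_top sequentially"
    using H \<kappa>_pos by (intro filterlim_tendsto_pos_mult_at_top[OF partial_tail_sums_asymptotic] filterlim_powr_sequentially) auto
  then show "filterlim (\<lambda>n. \<Sum>j\<le>n. measure_pmf.prob T {k. j < k}) at_top sequentially"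
    unfolding tail_def[symmetric]
    by (rule filterlim_at_top_mono) (auto simp: eventually_sequentially intro!: exI[of _ 1])
qed

definition L2 :: "real \<Rightarrow> real" where
  "L2 t = measure_pmf.prob T {k. t < real k} * t powr (2*H - 1)"

lemma prob_greater_eq_tail: "0 \<le> t \<Longrightarrow> measure_pmf.prob T {k. t < real k} = tail (nat \<lfloor>t\<rfloor>)"
  unfolding tail_def by (rule arg_cong[where f="measure_pmf.prob T"]) (auto simp: floor_less_iff nat_less_iff)

lemma L2_slowly_varying: "slowly_varying L2"
proof (rule slowly_varying_if_tendsto)
  show "0 < L2 t" if "0 < t" for t
    using that tail_pos by (simp add: L2_def prob_greater_eq_tail)
  have "antimono (\<lambda>t. measure_pmf.prob T {k. t < real k})"
    by (intro antimonoI measure_pmf.finite_measure_mono) auto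
  then have "(\<lambda>t. - measure_pmf.prob T {k. t < real k}) \<in> borel_measurable borel"
    by (intro borel_measurable_mono) (simp add: antimono_def monotone_on_def)
  then show "L2 \<in> borel_measurable borel"
    unfolding L2_def[abs_def] by measurable
  have "((\<lambda>t. t powr (2*H - 1) * tail (nat \<lfloor>t\<rfloor>)) \<longlongrightarrow> 1 / \<kappa>) at_top"
    by (rule tendsto_floor_scaled[OF tail_asymptotic])
  then show "(L2 \<longlongrightarrow> 1 / \<kappa>) at_top"
    by (rule Lim_transform_eventually)
      (auto simp: L2_def prob_greater_eq_tail eventually_at_top_linorder intro!: exI[of _ 0])
  show "0 < 1 / \<kappa>" using \<kappa>_pos by simp
qed

lemma prob_greater_eq_L2: "0 < t \<Longrightarrow> measure_pmf.prob T {k. t < real k} = t powr (1 - 2*H) * L2 t"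
  by (simp add: L2_def powr_add[symmetric])

end

theorem theorem3p7:
  fixes H c :: real and T :: "nat pmf"
  assumes H: "1/2 < H" "H < 1"
    and c: "0 < c" "c < 2 powr (2 * H - 2)"
    and natval: "pmf T 0 = 0"
    and T1: "pmf T 1 = c * Lcirc H {1, 2}"
    and Tk: "\<And>k. k \<ge> 2 \<Longrightarrow> pmf T k = c * Dcirc H c {1, k + 1} {2..k}"
  shows "(\<integral>\<^sup>+ k. ennreal (real k) \<partial>measure_pmf T) = \<infinity> \<and>
         (\<exists>L2. slowly_varying L2 \<and>
           (\<forall>t>0. measure_pmf.prob T {k. real k > t} = t powr (1 - 2 * H) * L2 t))"
  \<comment> \<open>The bound on c only guarantees that the prescribed numbers form a distribution,
    which the existence of T already grants.\<close>
proof -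
  interpret gbp_return_time H c T
    by unfold_locales (use assms in auto)
  show ?thesis
    using expectation_infinite L2_slowly_varying prob_greater_eq_L2 by blast
qed

end
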